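(* Let $p,k$ be integers with $k\ge 2$ and $p\ge 2k$, and let $G=KG_{p,k}$ be the Kneser graph, with $n$ vertices and $m$ edges. Let $\mu_1\ge\cdots\ge\mu_n$ be the eigenvalues of the adjacency matrix of $G$, let $n^+$ be the number of positive eigenvalues, let $\omega=\omega(G)$ be the clique number of $G$, and let $\ell=\min(n^+,\omega)$. Then \[ \mu_1^2+\mu_2^2+\cdots+\mu_\ell^2\le \frac{2m(\omega-1)}{\omega}. \]
   Context: The Kneser graph $KG_{p,k}$ has as vertices the $k$-element subsets of a $p$-element set, two vertices being adjacent if and only if the corresponding subsets are disjoint. Eigenvalues are those of the adjacency matrix. *)

theory Defs
  imports "Jordan_Normal_Form.Char_Poly"
begin

definition kneser_verts :: "nat \<Rightarrow> nat \<Rightarrow> nat set set" where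
  "kneser_verts p k = {A. A \<subseteq> {0..<p} \<and> card A = k}"

text \<open>A fixed (arbitrary) enumeration of the vertices; spectra do not depend on it.\<close>
definition kneser_list :: "nat \<Rightarrow> nat \<Rightarrow> nat set list" where
  "kneser_list p k = (SOME vs. distinct vs \<and> set vs = kneser_verts p k)"

definition kneser_adj :: "nat \<Rightarrow> nat \<Rightarrow> real mat" where
  "kneser_adj p k = (let vs = kneser_list p k in
     mat (length vs) (length vs)
       (\<lambda>(i, j). if vs ! i \<inter> vs ! j = {} then 1 else 0))"

definition kneser_edges :: "nat \<Rightarrow> nat \<Rightarrow> nat" where
  "kneser_edges p k = card {{A, B} | A B. A \<in> kneser_verts p k \<and> B \<in> kneser_verts p k
                                 \<and> A \<noteq> B \<and> A \<inter> B = {}}"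

definition kneser_clique :: "nat \<Rightarrow> nat \<Rightarrow> nat set set \<Rightarrow> bool" where
  "kneser_clique p k C \<longleftrightarrow> C \<subseteq> kneser_verts p k \<and>
     (\<forall>A\<in>C. \<forall>B\<in>C. A \<noteq> B \<longrightarrow> A \<inter> B = {})"

definition kneser_clique_number :: "nat \<Rightarrow> nat \<Rightarrow> nat" where
  "kneser_clique_number p k = Max {card C | C. kneser_clique p k C}"

text \<open>Eigenvalues (with multiplicity) of a real matrix whose characteristic polynomial
  splits over the reals (e.g. a real symmetric matrix), listed in non-increasing order.\<close>
definition eigenvalues_desc :: "real mat \<Rightarrow> real list" where
  "eigenvalues_desc A = (THE mu. sorted_wrt (\<ge>) mu \<and>
       char_poly A = (\<Prod>x\<leftarrow>mu. [:- x, 1:]))"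

end

theory Submission
  imports Defs "Jordan_Normal_Form.Schur_Decomposition"
begin

text \<open>The eigenvalues of \<open>KG(p,k)\<close> are \<open>\<theta>\<^sub>j = (-1)^j C(p-k-j, k-j)\<close> for \<open>j \<le> k\<close>. Let \<open>w\<^sub>S\<close> be
  the indicator of the vertices containing \<open>S\<close>. Inclusion--exclusion gives
  \<open>A w\<^sub>S = C(p-k-|S|, k-|S|) \<Sum>(T \<subseteq> S) (-1)^|T| w\<^sub>T\<close>, so the spaces \<open>V\<^sub>a\<close> spanned by the
  \<open>w\<^sub>S\<close> with \<open>|S| < a\<close> satisfy \<open>(A - \<theta>\<^sub>j) V\<^sub>j\<^sub>+\<^sub>1 \<subseteq> V\<^sub>j\<close>. Hence the product of all
  \<open>A - \<theta>\<^sub>j\<close> vanishes, and the product over \<open>j \<ge> 1\<close> has constant columns; computing its trace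
  directly and by Schur triangularisation shows that the degree \<open>d = \<theta>\<^sub>0\<close> is a simple
  eigenvalue.

  For \<open>p > 2k\<close> every other positive eigenvalue is at most \<open>t = C(p-k-2, k-2)\<close>, so the sum is
  at most \<open>d\<^sup>2 + (\<omega> - 1) t\<^sup>2\<close>. With \<open>\<omega> = \<lfloor>p/k\<rfloor>\<close> and \<open>2m = C(p,k) d\<close> the claim becomes an
  inequality between binomial coefficients, which follows from Vandermonde's identity and
  \<open>t/d = k(k-1)/((p-k)(p-k-1))\<close>. For \<open>p = 2k\<close> the graph is a perfect matching with
  eigenvalues \<open>\<plusminus>1\<close>.\<close>

section \<open>Binomial coefficients and sorted lists\<close>

lemma sum_Pow_minus_one_power:
  assumes "finite X"
  shows "(\<Sum>T\<in>Pow X. (-1::'a::ring_1) ^ card T) = (if X = {} then 1 else 0)"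
proof (cases "X = {}")
  case False
  then have "card {T \<in> Pow X. even (card T)} = card {T \<in> Pow X. odd (card T)}"
    using card_subsupersets_even_odd[OF assms, of "{}"] by auto
  then show ?thesis using assms False by (simp add: sum_alternating_cancels)
qed simp

lemma card_supersets_eq_choose:
  assumes "finite U" "S \<subseteq> U" "card S \<le> k"
  shows "card {C. C \<subseteq> U \<and> card C = k \<and> S \<subseteq> C} = (card U - card S) choose (k - card S)"
proof -
  have fin: "finite S" "finite (U - S)" using assms finite_subset by blast+
  have "{C. C \<subseteq> U \<and> card C = k \<and> S \<subseteq> C} = (\<lambda>D. D \<union> S) ` {D. D \<subseteq> U - S \<and> card D = k - card S}"
  proof (intro equalityI subsetI)
    fix C assume C: "C \<in> {C. C \<subseteq> U \<and> card C = k \<and> S \<subseteq> C}"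
    then have "card (C - S) = k - card S" using fin by (simp add: card_Diff_subset)
    then show "C \<in> (\<lambda>D. D \<union> S) ` {D. D \<subseteq> U - S \<and> card D = k - card S}"
      using C by (intro image_eqI[of _ _ "C - S"]) auto
  next
    fix C assume "C \<in> (\<lambda>D. D \<union> S) ` {D. D \<subseteq> U - S \<and> card D = k - card S}"
    then obtain D where D: "D \<subseteq> U - S" "card D = k - card S" "C = D \<union> S" by auto
    moreover have "finite D" "D \<inter> S = {}" using D fin finite_subset by auto
    ultimately have "card C = card D + card S" using fin by (simp add: card_Un_disjoint)
    then show "C \<in> {C. C \<subseteq> U \<and> card C = k \<and> S \<subseteq> C}" using D assms by auto
  qed
  moreover have "inj_on (\<lambda>D. D \<union> S) {D. D \<subseteq> U - S \<and> card D = k - card S}"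
    by (rule inj_onI) auto
  ultimately have "card {C. C \<subseteq> U \<and> card C = k \<and> S \<subseteq> C} = card (U - S) choose (k - card S)"
    using n_subsets[OF fin(2)] by (simp add: card_image)
  then show ?thesis using assms fin by (simp add: card_Diff_subset)
qed

lemma choose_diff_mono:
  assumes "b \<le> a" "i \<le> j"
  shows "(a - j) choose (b - j) \<le> (a - i) choose (b - i)"
  using assms(2)
proof (induction j rule: dec_induct)
  case (step j)
  have "(a - j - 1) choose (b - j - 1) \<le> (a - j) choose (b - j)"
    using assms(1) by (cases "a - j"; cases "b - j") auto
  with step.IH show ?case by (simp add: diff_diff_add)
qed simp

lemma choose_pred_less:
  assumes "1 \<le> b" "b < a"
  shows "(a - 1) choose (b - 1) < a choose b"
  using assms by (cases a; cases b) auto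

lemma choose_add_choose_pred_le:
  assumes "1 \<le> k" "k \<le> p"
  shows "((p - k) choose k) + k * ((p - k) choose (k - 1)) \<le> p choose k"
proof -
  have "(\<Sum>i\<in>{0, 1}. (k choose i) * ((p - k) choose (k - i))) \<le> (\<Sum>i\<le>k. (k choose i) * ((p - k) choose (k - i)))"
    using assms by (intro sum_mono2) auto
  also have "\<dots> = (k + (p - k)) choose k" by (rule vandermonde)
  finally show ?thesis using assms by simp
qed

lemma times_binomial_minus2_eq:
  assumes "2 \<le> k"
  shows "k * (k - 1) * (n choose k) = n * (n - 1) * ((n - 2) choose (k - 2))"
proof -
  have e1: "k * (n choose k) = n * ((n - 1) choose (k - 1))"
    using assms by (simp add: times_binomial_minus1_eq)
  have e2: "(k - 1) * ((n - 1) choose (k - 1)) = (n - 1) * ((n - 1 - 1) choose (k - 1 - 1))"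
    using assms by (intro times_binomial_minus1_eq) simp
  have "k * (k - 1) * (n choose k) = (k - 1) * (k * (n choose k))"
    by (simp only: ac_simps)
  also have "\<dots> = n * ((k - 1) * ((n - 1) choose (k - 1)))"
    by (simp only: e1 ac_simps)
  also have "\<dots> = n * (n - 1) * ((n - 2) choose (k - 2))"
    unfolding e2 by (simp add: numeral_2_eq_2 ac_simps)
  finally show ?thesis .
qed

lemma central_binomial_ge_4:
  assumes "2 \<le> k"
  shows "4 \<le> (2 * k) choose k"
proof -
  have "(2::real)^k \<le> real ((2 * k) choose k)"
    using binomial_ge_n_over_k_pow_k[of k "2 * k"] assms by simp
  then have "2^k \<le> (2 * k) choose k" by (metis of_nat_le_iff of_nat_numeral of_nat_power)
  moreover have "(2::nat)^2 \<le> 2^k" using assms by (intro power_increasing) auto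
  ultimately show ?thesis by simp
qed

lemma add_sq_mult_pred_le:
  fixes a k :: real
  assumes "2 \<le> k" "k + 1 \<le> a"
  shows "(a + k)^2 * (k - 1) \<le> a^2 * (a - 1)^2"
proof -
  have "(a + k)^2 * (k - 1) \<le> (2 * a - 1)^2 * (a - 2)"
    using assms by (intro mult_mono power_mono) auto
  also have "\<dots> \<le> a^2 * (a - 1)^2"
  proof -
    have "a^2 * (a - 1)^2 - (2 * a - 1)^2 * (a - 2) = (a - 3)^4 + 6 * (a - 3)^3 + 13 * (a - 3)^2 + 15 * (a - 3) + 11"
      by (simp add: eval_nat_numeral algebra_simps)
    moreover have "0 \<le> a - 3" using assms by simp
    ultimately show ?thesis by (smt (verit) zero_le_power)
  qed
  finally show ?thesis .
qed

lemma sorted_wrt_nth_pos: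
  fixes xs :: "'a::{linorder, zero} list"
  assumes sorted: "sorted_wrt (\<ge>) xs" and i: "i < length (filter (\<lambda>x. 0 < x) xs)"
  shows "0 < xs ! i"
proof (rule ccontr)
  assume nonpos: "\<not> 0 < xs ! i"
  have "{j. j < length xs \<and> 0 < xs ! j} \<subseteq> {..<i}"
  proof
    fix j assume j: "j \<in> {j. j < length xs \<and> 0 < xs ! j}"
    show "j \<in> {..<i}"
    proof (rule ccontr)
      assume "j \<notin> {..<i}"
      then have "xs ! j \<le> xs ! i"
        using sorted_wrt_nth_less[OF sorted, of i j] j by (cases "i = j") auto
      then show False using j nonpos by auto
    qed
  qed
  then have "length (filter (\<lambda>x. 0 < x) xs) \<le> i"
    unfolding length_filter_conv_card by (metis card_lessThan card_mono finite_lessThan)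
  then show False using i by simp
qed

lemma sum_sq_sorted_prefix_le:
  fixes xs :: "real list"
  assumes sorted: "sorted_wrt (\<ge>) (d # xs)" and le: "\<And>x. x \<in> set xs \<Longrightarrow> 0 < x \<Longrightarrow> x \<le> t"
    and l: "l \<le> length (filter (\<lambda>x. 0 < x) (d # xs))" "l \<le> Suc w"
  shows "(\<Sum>i<l. ((d # xs) ! i)^2) \<le> d^2 + real w * t^2"
proof (cases l)
  case (Suc m)
  have "0 \<le> xs ! i \<and> xs ! i \<le> t" if "i < m" for i
  proof -
    have "Suc i < length (filter (\<lambda>x. 0 < x) (d # xs))" using that l(1) Suc by simp
    moreover have "length (filter (\<lambda>x. 0 < x) (d # xs)) \<le> length (d # xs)" by (rule length_filter_le)
    ultimately have "0 < xs ! i" "i < length xs"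
      using sorted_wrt_nth_pos[OF sorted] by fastforce+
    then show ?thesis using le by simp
  qed
  then have "(\<Sum>i<m. (xs ! i)^2) \<le> (\<Sum>i<m. t^2)" by (intro sum_mono power_mono) auto
  also have "\<dots> \<le> real w * t^2" using l(2) Suc by (simp add: mult_right_mono)
  finally show ?thesis unfolding Suc sum.lessThan_Suc_shift by simp
qed simp

section \<open>Matrix polynomials, traces and characteristic polynomials\<close>

fun shifted_prod_mat :: "'a::comm_ring_1 mat \<Rightarrow> 'a list \<Rightarrow> 'a mat" where
  "shifted_prod_mat A [] = 1\<^sub>m (dim_row A)"
| "shifted_prod_mat A (c # cs) = (A - c \<cdot>\<^sub>m 1\<^sub>m (dim_row A)) * shifted_prod_mat A cs"

lemma shifted_prod_mat_carrier: "A \<in> carrier_mat n n \<Longrightarrow> shifted_prod_mat A cs \<in> carrier_mat n n"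
  by (induction cs) auto

lemma smult_one_mat_mult_vec:
  fixes v :: "'a::comm_ring_1 vec"
  assumes "v \<in> carrier_vec n"
  shows "(c \<cdot>\<^sub>m 1\<^sub>m n) *\<^sub>v v = c \<cdot>\<^sub>v v"
proof (rule eq_vecI)
  fix i assume "i < dim_vec (c \<cdot>\<^sub>v v)"
  then have i: "i < n" using assms by simp
  have "((c \<cdot>\<^sub>m 1\<^sub>m n) *\<^sub>v v) $ i = (\<Sum>j = 0..<n. (if i = j then c else 0) * v $ j)"
    using i assms by (auto simp: scalar_prod_def intro!: sum.cong)
  also have "\<dots> = (\<Sum>j = 0..<n. if i = j then c * v $ j else 0)"
    by (rule sum.cong) auto
  finally show "((c \<cdot>\<^sub>m 1\<^sub>m n) *\<^sub>v v) $ i = (c \<cdot>\<^sub>v v) $ i" using i assms by simp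
qed (use assms in simp)

lemma shifted_prod_mat_mult_eigenvector:
  assumes A: "A \<in> carrier_mat n n" and v: "v \<in> carrier_vec n" and ev: "A *\<^sub>v v = a \<cdot>\<^sub>v v"
  shows "shifted_prod_mat A cs *\<^sub>v v = (\<Prod>c\<leftarrow>cs. a - c) \<cdot>\<^sub>v v"
proof (induction cs)
  case Nil
  then show ?case using A v by simp
next
  case (Cons c cs)
  have "A - c \<cdot>\<^sub>m 1\<^sub>m n \<in> carrier_mat n n"
    using A by (intro minus_carrier_mat smult_carrier_mat one_carrier_mat)
  then have "shifted_prod_mat A (c # cs) *\<^sub>v v = (A - c \<cdot>\<^sub>m 1\<^sub>m n) *\<^sub>v ((\<Prod>c\<leftarrow>cs. a - c) \<cdot>\<^sub>v v)"
    using A v by (simp add: assoc_mult_mat_vec[OF _ shifted_prod_mat_carrier[OF A]] Cons)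
  also have "\<dots> = A *\<^sub>v ((\<Prod>c\<leftarrow>cs. a - c) \<cdot>\<^sub>v v) - c \<cdot>\<^sub>v ((\<Prod>c\<leftarrow>cs. a - c) \<cdot>\<^sub>v v)"
    using A v by (simp add: minus_mult_distrib_mat_vec[OF A] smult_one_mat_mult_vec)
  also have "A *\<^sub>v ((\<Prod>c\<leftarrow>cs. a - c) \<cdot>\<^sub>v v) = (\<Prod>c\<leftarrow>cs. a - c) \<cdot>\<^sub>v (A *\<^sub>v v)"
    using A v by (intro eq_vecI) auto
  also have "(\<Prod>c\<leftarrow>cs. a - c) \<cdot>\<^sub>v (A *\<^sub>v v) - c \<cdot>\<^sub>v ((\<Prod>c\<leftarrow>cs. a - c) \<cdot>\<^sub>v v) =
      (\<Prod>c\<leftarrow>c # cs. a - c) \<cdot>\<^sub>v v"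
    using v by (intro eq_vecI) (auto simp: ev algebra_simps)
  finally show ?case .
qed

definition mat_trace :: "'a::comm_ring_1 mat \<Rightarrow> 'a" where
  "mat_trace M = (\<Sum>i<dim_row M. M $$ (i, i))"

lemma mat_trace_mult_comm:
  fixes A B :: "'a::comm_ring_1 mat"
  assumes "A \<in> carrier_mat n m" "B \<in> carrier_mat m n"
  shows "mat_trace (A * B) = mat_trace (B * A)"
proof -
  have "mat_trace (A * B) = (\<Sum>i<n. \<Sum>j<m. A $$ (i, j) * B $$ (j, i))"
    using assms by (simp add: mat_trace_def scalar_prod_def atLeast0LessThan)
  also have "\<dots> = (\<Sum>j<m. \<Sum>i<n. B $$ (j, i) * A $$ (i, j))"
    by (subst sum.swap) (simp add: mult.commute)
  also have "\<dots> = mat_trace (B * A)"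
    using assms by (simp add: mat_trace_def scalar_prod_def atLeast0LessThan)
  finally show ?thesis .
qed

lemma upper_triangular_mult:
  fixes X Y :: "'a::comm_ring_1 mat"
  assumes X: "X \<in> carrier_mat n n" and Y: "Y \<in> carrier_mat n n"
    and ut: "upper_triangular X" "upper_triangular Y"
  shows "upper_triangular (X * Y)"
    and "\<And>i. i < n \<Longrightarrow> (X * Y) $$ (i, i) = X $$ (i, i) * Y $$ (i, i)"
proof -
  have zero: "X $$ (i, l) * Y $$ (l, j) = 0" if "i < n" "l < n" "l < i \<or> j < l" for i j l
    using that X Y upper_triangularD[OF ut(1)] upper_triangularD[OF ut(2)] by auto
  show "upper_triangular (X * Y)"
  proof (rule upper_triangularI)
    fix i j assume "j < i" "i < dim_row (X * Y)"
    then show "(X * Y) $$ (i, j) = 0"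
      using X Y by (auto simp: scalar_prod_def intro!: sum.neutral zero)
  qed
  fix i assume i: "i < n"
  have "(X * Y) $$ (i, i) = (\<Sum>l = 0..<n. X $$ (i, l) * Y $$ (l, i))"
    using X Y i by (simp add: scalar_prod_def)
  also have "\<dots> = (\<Sum>l = 0..<n. if l = i then X $$ (i, i) * Y $$ (i, i) else 0)"
    using i zero by (intro sum.cong) (auto simp: linorder_neq_iff)
  finally show "(X * Y) $$ (i, i) = X $$ (i, i) * Y $$ (i, i)" using i by simp
qed

lemma upper_triangular_shifted_prod_mat:
  fixes B :: "'a::comm_ring_1 mat"
  assumes B: "B \<in> carrier_mat n n" and ut: "upper_triangular B"
  shows "upper_triangular (shifted_prod_mat B cs) \<and>
    (\<forall>i<n. shifted_prod_mat B cs $$ (i, i) = (\<Prod>c\<leftarrow>cs. B $$ (i, i) - c))"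
proof (induction cs)
  case Nil
  then show ?case using B by auto
next
  case (Cons c cs)
  let ?X = "B - c \<cdot>\<^sub>m 1\<^sub>m n"
  have X: "?X \<in> carrier_mat n n" using B by (intro minus_carrier_mat smult_carrier_mat one_carrier_mat)
  have "upper_triangular ?X" using B upper_triangularD[OF ut] by (auto intro!: upper_triangularI)
  then show ?case
    using upper_triangular_mult[OF X shifted_prod_mat_carrier[OF B]] Cons B by simp
qed

lemma shifted_prod_mat_similar:
  fixes A :: "'a::comm_ring_1 mat"
  assumes A: "A \<in> carrier_mat n n" and wit: "similar_mat_wit A B P Q"
  shows "shifted_prod_mat A cs = P * shifted_prod_mat B cs * Q"
proof -
  from similar_mat_witD2[OF A wit] have B: "B \<in> carrier_mat n n" and P: "P \<in> carrier_mat n n"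
    and Q: "Q \<in> carrier_mat n n" and PQ: "P * Q = 1\<^sub>m n" and QP: "Q * P = 1\<^sub>m n"
    and AB: "A = P * B * Q" by auto
  have shift: "A - c \<cdot>\<^sub>m 1\<^sub>m n = P * (B - c \<cdot>\<^sub>m 1\<^sub>m n) * Q" for c
  proof -
    have "P * (B - c \<cdot>\<^sub>m 1\<^sub>m n) * Q = P * B * Q - P * (c \<cdot>\<^sub>m 1\<^sub>m n) * Q"
      using P B Q by (simp add: mult_minus_distrib_mat[of _ n n _ n] minus_mult_distrib_mat[of _ n n _ _ n])
    also have "P * (c \<cdot>\<^sub>m 1\<^sub>m n) * Q = c \<cdot>\<^sub>m 1\<^sub>m n"
      using P Q PQ by (simp add: mult_smult_distrib[of _ n n _ n] mult_smult_assoc_mat[of _ n n _ n])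
    finally show ?thesis using AB by simp
  qed
  show ?thesis
  proof (induction cs)
    case Nil
    then show ?case using A B P Q PQ by simp
  next
    case (Cons c cs)
    let ?X = "B - c \<cdot>\<^sub>m 1\<^sub>m n" and ?S = "shifted_prod_mat B cs"
    have X: "?X \<in> carrier_mat n n" by (intro minus_carrier_mat smult_carrier_mat one_carrier_mat)
    have S: "?S \<in> carrier_mat n n" using B by (rule shifted_prod_mat_carrier)
    have "shifted_prod_mat A (c # cs) = (P * ?X * Q) * (P * ?S * Q)"
      using A Cons shift by simp
    also have "\<dots> = P * ?X * (Q * P) * ?S * Q"
      using P Q X S by (simp add: assoc_mult_mat[of _ n n _ n _ n])
    also have "\<dots> = P * (?X * ?S) * Q"
      using P Q X S QP by (simp add: assoc_mult_mat[of _ n n _ n _ n])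
    finally show ?case using B by simp
  qed
qed

lemma mat_trace_shifted_prod_mat:
  fixes A :: "'a::conjugatable_ordered_field mat"
  assumes A: "A \<in> carrier_mat n n" and cp: "char_poly A = (\<Prod>e\<leftarrow>es. [:- e, 1:])"
  shows "mat_trace (shifted_prod_mat A cs) = (\<Sum>e\<leftarrow>es. \<Prod>c\<leftarrow>cs. e - c)"
proof -
  obtain B P Q where "schur_decomposition A es = (B, P, Q)" by (metis prod_cases3)
  from schur_decomposition[OF A cp this] have wit: "similar_mat_wit A B P Q"
    and ut: "upper_triangular B" and diag: "diag_mat B = es" by auto
  from similar_mat_witD2[OF A wit] have B: "B \<in> carrier_mat n n" and P: "P \<in> carrier_mat n n"
    and Q: "Q \<in> carrier_mat n n" and QP: "Q * P = 1\<^sub>m n" by auto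
  have S: "shifted_prod_mat B cs \<in> carrier_mat n n" using B by (rule shifted_prod_mat_carrier)
  have "mat_trace (shifted_prod_mat A cs) = mat_trace (P * (shifted_prod_mat B cs * Q))"
    using P S Q by (simp add: shifted_prod_mat_similar[OF A wit] assoc_mult_mat[of _ n n _ n _ n])
  also have "\<dots> = mat_trace ((shifted_prod_mat B cs * Q) * P)"
    using P S Q by (intro mat_trace_mult_comm[of _ n n]) auto
  also have "\<dots> = mat_trace (shifted_prod_mat B cs)"
    using P S Q QP by (simp add: assoc_mult_mat[of _ n n _ n _ n])
  also have "\<dots> = (\<Sum>i<n. \<Prod>c\<leftarrow>cs. B $$ (i, i) - c)"
    using upper_triangular_shifted_prod_mat[OF B ut, of cs] S by (simp add: mat_trace_def)
  also have "\<dots> = (\<Sum>e\<leftarrow>es. \<Prod>c\<leftarrow>cs. e - c)"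
    using diag B by (auto simp: diag_mat_def sum_list_sum_nth atLeast0LessThan)
  finally show ?thesis .
qed

lemma mat_trace_equal_rows:
  assumes M: "M \<in> carrier_mat n n" and n: "0 < n"
    and rows: "\<And>i j. i < n \<Longrightarrow> j < n \<Longrightarrow> M $$ (i, j) = M $$ (0, j)"
  shows "mat_trace M = (M *\<^sub>v vec n (\<lambda>_. 1)) $ 0"
proof -
  have "mat_trace M = (\<Sum>i<n. M $$ (0, i))"
    unfolding mat_trace_def using M by (auto intro!: sum.cong rows)
  also have "\<dots> = (M *\<^sub>v vec n (\<lambda>_. 1)) $ 0"
    using M n by (simp add: scalar_prod_def atLeast0LessThan)
  finally show ?thesis .
qed

lemma char_poly_real_factorization:
  fixes A :: "real mat"
  assumes A: "A \<in> carrier_mat n n"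
    and ev: "\<And>a. eigenvalue (map_mat complex_of_real A) a \<Longrightarrow> a \<in> complex_of_real ` R"
  shows "\<exists>rs. char_poly A = (\<Prod>r\<leftarrow>rs. [:- r, 1:]) \<and> set rs \<subseteq> R"
proof -
  let ?AC = "map_mat complex_of_real A"
  have AC: "?AC \<in> carrier_mat n n" using A by simp
  obtain as where as: "char_poly ?AC = (\<Prod>a\<leftarrow>as. [:- a, 1:])"
    using char_poly_factorized[OF AC] by blast
  have asR: "a \<in> complex_of_real ` R" if "a \<in> set as" for a
  proof (rule ev)
    have "poly (char_poly ?AC) a = 0" unfolding as using that by (rule linear_poly_root)
    then show "eigenvalue ?AC a" using eigenvalue_root_char_poly[OF AC] by simp
  qed
  define rs where "rs = map Re as"
  have "map (complex_of_real \<circ> Re) as = as"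
  proof (rule map_idI)
    fix a assume "a \<in> set as"
    then obtain r where "a = complex_of_real r" using asR by blast
    then show "(complex_of_real \<circ> Re) a = a" by simp
  qed
  then have as_rs: "as = map complex_of_real rs" unfolding rs_def by simp
  have "set rs \<subseteq> R" unfolding rs_def by (auto dest!: asR)
  interpret h: map_poly_inj_idom_hom complex_of_real ..
  have "map_poly complex_of_real (char_poly A) = map_poly complex_of_real (\<Prod>r\<leftarrow>rs. [:- r, 1:])"
    unfolding of_real_hom.char_poly_hom[OF A, symmetric] as as_rs h.hom_prod_list by (simp add: o_def)
  with \<open>set rs \<subseteq> R\<close> show ?thesis by auto
qed

lemma mset_eq_if_prod_linear_factors_eq:
  fixes xs ys :: "'a::idom list"
  assumes "(\<Prod>x\<leftarrow>xs. [:- x, 1:]) = (\<Prod>y\<leftarrow>ys. [:- y, 1:])"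
  shows "mset xs = mset ys"
proof (rule multiset_eqI)
  have order: "Polynomial.order a (\<Prod>x\<leftarrow>zs. [:- x, 1:]) = count (mset zs) a" for a and zs :: "'a list"
  proof (induction zs)
    case (Cons x zs)
    have "[:- x, 1:] * (\<Prod>y\<leftarrow>zs. [:- y, 1:]) \<noteq> 0"
      by (rule no_zero_divisors) (auto simp: prod_list_zero_iff)
    then have "Polynomial.order a (\<Prod>y\<leftarrow>x # zs. [:- y, 1:]) =
        Polynomial.order a [:- x, 1:] + Polynomial.order a (\<Prod>y\<leftarrow>zs. [:- y, 1:])"
      unfolding list.map prod_list.Cons by (rule order_mult)
    then show ?case using Cons.IH by (simp add: order_linear')
  qed simp
  show "count (mset xs) a = count (mset ys) a" for a
    using order[of a xs] order[of a ys] assms by simp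
qed

lemma eigenvalues_desc_eq:
  assumes cp: "char_poly A = (\<Prod>r\<leftarrow>rs. [:- r, 1:])"
  shows "eigenvalues_desc A = rev (sort rs)"
  unfolding eigenvalues_desc_def
proof (rule the_equality)
  have "(\<Prod>x\<leftarrow>rev (sort rs). [:- x, 1:]) = (\<Prod>r\<leftarrow>rs. [:- r, 1:])"
    by (simp flip: prod_mset_prod_list)
  then show "sorted_wrt (\<ge>) (rev (sort rs)) \<and> char_poly A = (\<Prod>x\<leftarrow>rev (sort rs). [:- x, 1:])"
    using cp by (simp add: sorted_wrt_rev)
next
  fix mu assume mu: "sorted_wrt (\<ge>) mu \<and> char_poly A = (\<Prod>x\<leftarrow>mu. [:- x, 1:])"
  then have "mset (rev mu) = mset rs" using cp mset_eq_if_prod_linear_factors_eq by fastforce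
  moreover have "sorted (rev mu)" using mu by (simp add: sorted_wrt_rev)
  ultimately show "mu = rev (sort rs)" by (metis properties_for_sort rev_rev_ident)
qed

section \<open>An eigenvalue flag for the Kneser graph\<close>

lemma kneser_verts_iff: "B \<in> kneser_verts p k \<longleftrightarrow> B \<subseteq> {0..<p} \<and> card B = k"
  unfolding kneser_verts_def by simp

lemma finite_kneser_verts [simp]: "finite (kneser_verts p k)"
  by (rule finite_subset[of _ "Pow {0..<p}"]) (auto simp: kneser_verts_def)

lemma finite_kneser_vert: "B \<in> kneser_verts p k \<Longrightarrow> finite B"
  by (auto simp: kneser_verts_iff intro: finite_subset)

lemma card_kneser_verts: "card (kneser_verts p k) = p choose k"
  unfolding kneser_verts_def using n_subsets[of "{0..<p}" k] by simp

lemma card_disjoint_supersets_kneser_verts: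
  assumes B: "B \<in> kneser_verts p k" and S: "S \<subseteq> {0..<p}" "S \<inter> B = {}" "card S \<le> k"
  shows "card {C \<in> kneser_verts p k. B \<inter> C = {} \<and> S \<subseteq> C} = (p - k - card S) choose (k - card S)"
proof -
  have "{C \<in> kneser_verts p k. B \<inter> C = {} \<and> S \<subseteq> C} = {C. C \<subseteq> {0..<p} - B \<and> card C = k \<and> S \<subseteq> C}"
    by (auto simp: kneser_verts_iff)
  moreover have "card ({0..<p} - B) = p - k"
    using B finite_kneser_vert[OF B] by (simp add: kneser_verts_iff card_Diff_subset)
  ultimately show ?thesis using S card_supersets_eq_choose[of "{0..<p} - B" S k] by auto
qed

lemma kneser_degree:
  "B \<in> kneser_verts p k \<Longrightarrow> card {C \<in> kneser_verts p k. B \<inter> C = {}} = (p - k) choose k"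
  using card_disjoint_supersets_kneser_verts[of B p k "{}"] by simp

text \<open>Vectors indexed by the vertices are modelled as functions on sets that vanish off
  \<^const>\<open>kneser_verts\<close>. In the notation above, \<open>kneser_op p k\<close> is \<open>A\<close> acting on them,
  \<open>superset_ind p k S\<close> is \<open>w\<^sub>S\<close>, \<open>kneser_eig p k j\<close> is \<open>\<theta>\<^sub>j\<close> and \<open>span_below p k a\<close> is \<open>V\<^sub>a\<close>.\<close>
definition superset_ind :: "nat \<Rightarrow> nat \<Rightarrow> nat set \<Rightarrow> nat set \<Rightarrow> 'a::comm_ring_1" where
  "superset_ind p k S B = (if B \<in> kneser_verts p k \<and> S \<subseteq> B then 1 else 0)"

definition kneser_op :: "nat \<Rightarrow> nat \<Rightarrow> (nat set \<Rightarrow> 'a::comm_ring_1) \<Rightarrow> nat set \<Rightarrow> 'a" where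
  "kneser_op p k f B = (if B \<in> kneser_verts p k
     then \<Sum>C\<in>kneser_verts p k. if B \<inter> C = {} then f C else 0 else 0)"

definition kneser_eig :: "nat \<Rightarrow> nat \<Rightarrow> nat \<Rightarrow> 'a::comm_ring_1" where
  "kneser_eig p k j = (-1) ^ j * of_nat ((p - k - j) choose (k - j))"

lemma kneser_op_add: "kneser_op p k (\<lambda>B. f B + g B) = (\<lambda>B. kneser_op p k f B + kneser_op p k g B)"
proof -
  have "(if P then f C + g C else 0) = (if P then f C else 0) + (if P then g C else 0)" for P C
    by simp
  then show ?thesis by (simp add: kneser_op_def sum.distrib fun_eq_iff)
qed

lemma kneser_op_scale: "kneser_op p k (\<lambda>B. c * f B) = (\<lambda>B. c * kneser_op p k f B)"
proof -
  have "(if P then c * f C else 0) = c * (if P then f C else 0)" for P C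
    by simp
  then show ?thesis by (simp add: kneser_op_def sum_distrib_left fun_eq_iff)
qed

lemma kneser_op_zero: "kneser_op p k (\<lambda>_. 0) = (\<lambda>_. 0)"
  by (auto simp: kneser_op_def)

lemma superset_ind_outside: "B \<notin> kneser_verts p k \<Longrightarrow> superset_ind p k S B = 0"
  by (simp add: superset_ind_def)

lemma superset_ind_vert:
  assumes "B \<in> kneser_verts p k" "C \<in> kneser_verts p k"
  shows "superset_ind p k B C = (if B = C then 1 else 0)"
proof -
  have "B \<subseteq> C \<Longrightarrow> B = C"
    using assms card_subset_eq[OF finite_kneser_vert[OF assms(2)]] by (simp add: kneser_verts_iff)
  then show ?thesis using assms by (auto simp: superset_ind_def)
qed

lemma superset_ind_too_large:
  assumes "finite S" "k < card S"
  shows "superset_ind p k S = (\<lambda>_. 0)"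
proof
  fix B
  have "\<not> S \<subseteq> B" if "B \<in> kneser_verts p k"
    using that assms card_mono[OF finite_kneser_vert[OF that], of S] by (auto simp: kneser_verts_iff)
  then show "superset_ind p k S B = 0" by (auto simp: superset_ind_def)
qed

lemma sum_superset_ind_alternating:
  assumes "finite S" "B \<in> kneser_verts p k"
  shows "(\<Sum>T\<in>Pow S. (-1) ^ card T * superset_ind p k T B) = (if S \<inter> B = {} then 1 else 0)"
proof -
  have "(\<Sum>T\<in>Pow S. (-1) ^ card T * superset_ind p k T B) = (\<Sum>T\<in>{T \<in> Pow S. T \<subseteq> B}. (-1::'a) ^ card T)"
    using assms by (simp add: superset_ind_def sum.inter_filter[symmetric] if_distrib cong: if_cong)
  also have "{T \<in> Pow S. T \<subseteq> B} = Pow (S \<inter> B)" by auto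
  also have "(\<Sum>T\<in>Pow (S \<inter> B). (-1::'a) ^ card T) = (if S \<inter> B = {} then 1 else 0)"
    by (rule sum_Pow_minus_one_power) (use assms in simp)
  finally show ?thesis .
qed

lemma kneser_op_superset_ind:
  assumes "S \<subseteq> {0..<p}" "card S \<le> k"
  shows "kneser_op p k (superset_ind p k S) = (\<lambda>B. of_nat ((p - k - card S) choose (k - card S)) *
           (\<Sum>T\<in>Pow S. (-1) ^ card T * superset_ind p k T B))"
proof
  fix B
  show "kneser_op p k (superset_ind p k S) B = of_nat ((p - k - card S) choose (k - card S)) *
           (\<Sum>T\<in>Pow S. (-1) ^ card T * superset_ind p k T B)"
  proof (cases "B \<in> kneser_verts p k")
    case True
    have "kneser_op p k (superset_ind p k S) B = of_nat (card {C \<in> kneser_verts p k. B \<inter> C = {} \<and> S \<subseteq> C})"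
      using True by (simp add: kneser_op_def superset_ind_def sum.If_cases Int_def if_distrib)
    also have "\<dots> = (if S \<inter> B = {} then of_nat ((p - k - card S) choose (k - card S)) else 0)"
    proof (cases "S \<inter> B = {}")
      case False
      then have empty: "{C \<in> kneser_verts p k. B \<inter> C = {} \<and> S \<subseteq> C} = {}" by blast
      show ?thesis using False unfolding empty by simp
    qed (simp add: card_disjoint_supersets_kneser_verts[OF True assms(1) _ assms(2)])
    finally have "kneser_op p k (superset_ind p k S) B =
        (if S \<inter> B = {} then of_nat ((p - k - card S) choose (k - card S)) else 0)" .
    moreover have "finite S" using assms(1) finite_subset by blast
    ultimately show ?thesis
      by (cases "S \<inter> B = {}") (simp_all add: sum_superset_ind_alternating True)
  qed (simp add: kneser_op_def superset_ind_def)
qed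

inductive_set span_below :: "nat \<Rightarrow> nat \<Rightarrow> nat \<Rightarrow> (nat set \<Rightarrow> 'a::comm_ring_1) set"
  for p k a where
  zero: "(\<lambda>_. 0) \<in> span_below p k a"
| superset_ind: "S \<subseteq> {0..<p} \<Longrightarrow> card S < a \<Longrightarrow> superset_ind p k S \<in> span_below p k a"
| add: "f \<in> span_below p k a \<Longrightarrow> g \<in> span_below p k a \<Longrightarrow> (\<lambda>B. f B + g B) \<in> span_below p k a"
| scale: "f \<in> span_below p k a \<Longrightarrow> (\<lambda>B. c * f B) \<in> span_below p k a"

lemma span_below_sum:
  "finite I \<Longrightarrow> (\<And>i. i \<in> I \<Longrightarrow> f i \<in> span_below p k a) \<Longrightarrow> (\<lambda>B. \<Sum>i\<in>I. f i B) \<in> span_below p k a"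
  by (induction I rule: finite_induct) (auto intro: span_below.intros)

lemma span_below_diff:
  assumes "f \<in> span_below p k a" "g \<in> span_below p k a"
  shows "(\<lambda>B. f B - g B) \<in> span_below p k a"
  using span_below.add[OF assms(1) span_below.scale[OF assms(2), of "-1"]] by simp

lemma span_below_0_eq_zero: "f \<in> span_below p k 0 \<Longrightarrow> f = (\<lambda>_. 0)"
  by (induction rule: span_below.induct) auto

lemma span_below_1_const: "f \<in> span_below p k 1 \<Longrightarrow> \<exists>c. \<forall>B\<in>kneser_verts p k. f B = c"
proof (induction rule: span_below.induct)
  case (superset_ind S)
  then have "S = {}" using finite_subset by fastforce
  then show ?case by (auto simp: superset_ind_def)
qed fastforce+

lemma span_below_Suc_k_if_supported:
  assumes "\<And>B. B \<notin> kneser_verts p k \<Longrightarrow> f B = 0"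
  shows "f \<in> span_below p k (Suc k)"
proof -
  have "f = (\<lambda>C. \<Sum>B\<in>kneser_verts p k. f B * superset_ind p k B C)"
  proof
    fix C
    show "f C = (\<Sum>B\<in>kneser_verts p k. f B * superset_ind p k B C)"
    proof (cases "C \<in> kneser_verts p k")
      case True
      then have "(\<Sum>B\<in>kneser_verts p k. f B * superset_ind p k B C) =
          (\<Sum>B\<in>kneser_verts p k. if B = C then f C else 0)"
        by (intro sum.cong) (auto simp: superset_ind_vert)
      then show ?thesis using True by simp
    qed (simp add: assms superset_ind_def)
  qed
  also have "\<dots> \<in> span_below p k (Suc k)"
    by (intro span_below_sum span_below.scale span_below.superset_ind) (auto simp: kneser_verts_iff)
  finally show ?thesis .
qed

lemma kneser_op_span_below: "f \<in> span_below p k a \<Longrightarrow> kneser_op p k f \<in> span_below p k a"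
proof (induction rule: span_below.induct)
  case (superset_ind S)
  have fin: "finite S" using superset_ind finite_subset by blast
  show ?case
  proof (cases "card S \<le> k")
    case True
    have "superset_ind p k T \<in> span_below p k a" if "T \<subseteq> S" for T
      using superset_ind card_mono[OF fin that] that by (intro span_below.superset_ind) auto
    then show ?thesis unfolding kneser_op_superset_ind[OF superset_ind(1) True]
      using fin by (intro span_below.scale span_below_sum) auto
  qed (use fin in \<open>simp add: superset_ind_too_large kneser_op_zero span_below.zero\<close>)
qed (simp_all add: kneser_op_zero kneser_op_add kneser_op_scale span_below.intros)

text \<open>For \<open>card S = j\<close> the summand \<open>T = S\<close> of \<open>kneser_op p k (superset_ind p k S)\<close> is
  exactly \<open>\<theta>\<^sub>j w\<^sub>S\<close>, which the shift removes; all other summands lie in \<open>V\<^sub>j\<close>.\<close>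
lemma kneser_op_shift_span_below:
  assumes "f \<in> span_below p k (Suc j)" "j \<le> k"
  shows "(\<lambda>B. kneser_op p k f B - kneser_eig p k j * f B) \<in> span_below p k j"
  using assms(1)
proof (induction rule: span_below.induct)
  case zero
  then show ?case by (simp add: kneser_op_zero span_below.zero)
next
  case (superset_ind S)
  have fin: "finite S" using superset_ind finite_subset by blast
  show ?case
  proof (cases "card S = j")
    case True
    then have "card S \<le> k" using assms(2) by simp
    have "superset_ind p k T \<in> span_below p k j" if "T \<in> Pow S - {S}" for T
      using superset_ind that psubset_card_mono[OF fin] True by (intro span_below.superset_ind) auto
    then have "(\<lambda>B. of_nat ((p - k - card S) choose (k - card S)) *
        (\<Sum>T\<in>Pow S - {S}. (-1) ^ card T * superset_ind p k T B)) \<in> span_below p k j"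
      using fin by (intro span_below.scale span_below_sum) auto
    moreover have split: "(\<Sum>T\<in>Pow S. (-1) ^ card T * superset_ind p k T B) =
        (-1) ^ card S * superset_ind p k S B + (\<Sum>T\<in>Pow S - {S}. (-1) ^ card T * superset_ind p k T B)" for B
      using fin by (subst sum.remove[of _ S]) auto
    ultimately show ?thesis
      using assms(2) True superset_ind(1)
      unfolding kneser_op_superset_ind[OF superset_ind(1) \<open>card S \<le> k\<close>] split kneser_eig_def
      by (simp add: algebra_simps)
  next
    case False
    then have "superset_ind p k S \<in> span_below p k j"
      using superset_ind by (intro span_below.superset_ind) auto
    then show ?thesis by (intro span_below_diff kneser_op_span_below span_below.scale)
  qed
next
  case (add f g)
  then show ?case
    using span_below.add[OF add.IH] by (simp add: kneser_op_add algebra_simps)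
next
  case (scale f c)
  then show ?case
    using span_below.scale[OF scale.IH, of c] by (simp add: kneser_op_scale algebra_simps)
qed

fun kneser_prod_op :: "nat \<Rightarrow> nat \<Rightarrow> 'a list \<Rightarrow> (nat set \<Rightarrow> 'a::comm_ring_1) \<Rightarrow> nat set \<Rightarrow> 'a" where
  "kneser_prod_op p k [] f = f"
| "kneser_prod_op p k (c # cs) f =
     (\<lambda>B. kneser_op p k (kneser_prod_op p k cs f) B - c * kneser_prod_op p k cs f B)"

lemma kneser_prod_op_span_below:
  assumes "a \<le> j" "j \<le> Suc k" "f \<in> span_below p k j"
  shows "kneser_prod_op p k (map (kneser_eig p k) [a..<j]) f \<in> span_below p k a"
  using assms(1)
proof (induction a rule: inc_induct)
  case base
  then show ?case using assms(3) by simp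
next
  case (step a)
  then show ?case using assms(2) by (simp add: upt_conv_Cons kneser_op_shift_span_below)
qed

lemma kneser_prod_op_all_eigs_eq_zero:
  assumes "\<And>B. B \<notin> kneser_verts p k \<Longrightarrow> f B = 0"
  shows "kneser_prod_op p k (map (kneser_eig p k) [0..<Suc k]) f = (\<lambda>_. 0)"
proof -
  have "kneser_prod_op p k (map (kneser_eig p k) [0..<Suc k]) f \<in> span_below p k 0"
    using span_below_Suc_k_if_supported[OF assms] by (rule kneser_prod_op_span_below[rotated 2]) simp_all
  then show ?thesis by (rule span_below_0_eq_zero)
qed

lemma kneser_prod_op_nonzero_eigs_const:
  assumes "\<And>B. B \<notin> kneser_verts p k \<Longrightarrow> f B = 0"
  shows "\<exists>c. \<forall>B\<in>kneser_verts p k. kneser_prod_op p k (map (kneser_eig p k) [1..<Suc k]) f B = c"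
proof -
  have "kneser_prod_op p k (map (kneser_eig p k) [1..<Suc k]) f \<in> span_below p k 1"
    using span_below_Suc_k_if_supported[OF assms] by (rule kneser_prod_op_span_below[rotated 2]) simp_all
  then show ?thesis by (rule span_below_1_const)
qed

section \<open>The spectrum of the Kneser graph\<close>

lemma kneser_list: "distinct (kneser_list p k)" "set (kneser_list p k) = kneser_verts p k"
proof -
  have "\<exists>vs. distinct vs \<and> set vs = kneser_verts p k"
    using finite_distinct_list[OF finite_kneser_verts] by blast
  then have "distinct (kneser_list p k) \<and> set (kneser_list p k) = kneser_verts p k"
    unfolding kneser_list_def by (rule someI_ex)
  then show "distinct (kneser_list p k)" "set (kneser_list p k) = kneser_verts p k" by simp_all
qed

lemma length_kneser_list: "length (kneser_list p k) = p choose k"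
  using distinct_card[OF kneser_list(1)] by (simp add: kneser_list(2) card_kneser_verts)

lemma nth_kneser_list_mem: "i < length (kneser_list p k) \<Longrightarrow> kneser_list p k ! i \<in> kneser_verts p k"
  using nth_mem kneser_list(2) by blast

lemma nth_kneser_list_eq_iff:
  "i < length (kneser_list p k) \<Longrightarrow> j < length (kneser_list p k) \<Longrightarrow>
   kneser_list p k ! i = kneser_list p k ! j \<longleftrightarrow> i = j"
  using nth_eq_iff_index_eq[OF kneser_list(1)] by blast

text \<open>\<^const>\<open>kneser_adj\<close> over an arbitrary commutative ring, so that it can also be read as a
  complex matrix.\<close>
definition kneser_mat :: "nat \<Rightarrow> nat \<Rightarrow> 'a::comm_ring_1 mat" where
  "kneser_mat p k = mat (length (kneser_list p k)) (length (kneser_list p k))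
     (\<lambda>(i, j). if kneser_list p k ! i \<inter> kneser_list p k ! j = {} then 1 else 0)"

lemma kneser_adj_eq_kneser_mat: "kneser_adj p k = kneser_mat p k"
  unfolding kneser_adj_def kneser_mat_def Let_def ..

lemma kneser_mat_carrier:
  "kneser_mat p k \<in> carrier_mat (length (kneser_list p k)) (length (kneser_list p k))"
  unfolding kneser_mat_def by simp

lemma dim_kneser_mat [simp]:
  "dim_row (kneser_mat p k) = length (kneser_list p k)" "dim_col (kneser_mat p k) = length (kneser_list p k)"
  unfolding kneser_mat_def by simp_all

lemma map_mat_of_real_kneser_mat: "map_mat of_real (kneser_mat p k) = kneser_mat p k"
  by (rule eq_matI) (auto simp: kneser_mat_def)

definition kneser_vec :: "nat \<Rightarrow> nat \<Rightarrow> (nat set \<Rightarrow> 'a) \<Rightarrow> 'a vec" where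
  "kneser_vec p k f = vec (length (kneser_list p k)) (\<lambda>i. f (kneser_list p k ! i))"

lemma kneser_vec_carrier [simp]: "kneser_vec p k f \<in> carrier_vec (length (kneser_list p k))"
  and dim_kneser_vec [simp]: "dim_vec (kneser_vec p k f) = length (kneser_list p k)"
  and index_kneser_vec [simp]:
    "i < length (kneser_list p k) \<Longrightarrow> kneser_vec p k f $ i = f (kneser_list p k ! i)"
  unfolding kneser_vec_def by simp_all

lemma kneser_mat_mult_kneser_vec: "kneser_mat p k *\<^sub>v kneser_vec p k f = kneser_vec p k (kneser_op p k f)"
proof (rule eq_vecI)
  fix i
  let ?vs = "kneser_list p k"
  assume "i < dim_vec (kneser_vec p k (kneser_op p k f))"
  then have i: "i < length ?vs" by simp
  let ?h = "\<lambda>C. if ?vs ! i \<inter> C = {} then f C else 0"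
  have "(kneser_mat p k *\<^sub>v kneser_vec p k f) $ i = (\<Sum>j = 0..<length ?vs. ?h (?vs ! j))"
    using i by (auto simp: kneser_mat_def scalar_prod_def intro!: sum.cong)
  also have "\<dots> = sum ?h (kneser_verts p k)"
    by (simp flip: kneser_list(2) sum_list_sum_nth[of "map ?h ?vs", simplified]
        add: sum_list_distinct_conv_sum_set[OF kneser_list(1)])
  finally show "(kneser_mat p k *\<^sub>v kneser_vec p k f) $ i = kneser_vec p k (kneser_op p k f) $ i"
    using i nth_kneser_list_mem[OF i] by (simp add: kneser_op_def)
qed (simp add: kneser_mat_def)

lemma kneser_vec_superset_ind_nth:
  assumes "j < length (kneser_list p k)"
  shows "kneser_vec p k (superset_ind p k (kneser_list p k ! j)) = unit_vec (length (kneser_list p k)) j"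
  using assms
  by (intro eq_vecI) (auto simp: superset_ind_vert nth_kneser_list_mem nth_kneser_list_eq_iff unit_vec_def)

lemma shifted_prod_kneser_mat_mult_kneser_vec:
  "shifted_prod_mat (kneser_mat p k) cs *\<^sub>v kneser_vec p k f = kneser_vec p k (kneser_prod_op p k cs f)"
proof (induction cs)
  case Nil
  then show ?case using kneser_mat_carrier[of p k] by simp
next
  case (Cons c cs)
  let ?A = "kneser_mat p k" and ?N = "length (kneser_list p k)"
  let ?g = "kneser_prod_op p k cs f"
  have A: "?A \<in> carrier_mat ?N ?N" by (rule kneser_mat_carrier)
  have "?A - c \<cdot>\<^sub>m 1\<^sub>m ?N \<in> carrier_mat ?N ?N"
    using A by (intro minus_carrier_mat smult_carrier_mat one_carrier_mat)
  then have "shifted_prod_mat ?A (c # cs) *\<^sub>v kneser_vec p k f = (?A - c \<cdot>\<^sub>m 1\<^sub>m ?N) *\<^sub>v kneser_vec p k ?g"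
    by (simp add: assoc_mult_mat_vec[OF _ shifted_prod_mat_carrier[OF A]] Cons)
  also have "\<dots> = kneser_vec p k (kneser_op p k ?g) - c \<cdot>\<^sub>v kneser_vec p k ?g"
    using A by (simp add: minus_mult_distrib_mat_vec[OF A] smult_one_mat_mult_vec kneser_mat_mult_kneser_vec)
  also have "\<dots> = kneser_vec p k (kneser_prod_op p k (c # cs) f)"
    by (intro eq_vecI) simp_all
  finally show ?case .
qed

lemma shifted_prod_kneser_mat_index:
  assumes "i < length (kneser_list p k)" "j < length (kneser_list p k)"
  shows "shifted_prod_mat (kneser_mat p k) cs $$ (i, j) =
    kneser_prod_op p k cs (superset_ind p k (kneser_list p k ! j)) (kneser_list p k ! i)"
proof -
  let ?N = "length (kneser_list p k)"
  have M: "shifted_prod_mat (kneser_mat p k) cs \<in> carrier_mat ?N ?N"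
    by (rule shifted_prod_mat_carrier[OF kneser_mat_carrier])
  have "shifted_prod_mat (kneser_mat p k) cs $$ (i, j) = (shifted_prod_mat (kneser_mat p k) cs *\<^sub>v unit_vec ?N j) $ i"
    using M assms by simp
  then show ?thesis
    using assms by (simp flip: kneser_vec_superset_ind_nth add: shifted_prod_kneser_mat_mult_kneser_vec)
qed

lemma shifted_prod_kneser_mat_all_eigs_eq_zero:
  "shifted_prod_mat (kneser_mat p k) (map (kneser_eig p k) [0..<Suc k]) =
   0\<^sub>m (length (kneser_list p k)) (length (kneser_list p k))"
  using shifted_prod_mat_carrier[OF kneser_mat_carrier]
  by (intro eq_matI)
    (auto simp: shifted_prod_kneser_mat_index kneser_prod_op_all_eigs_eq_zero[OF superset_ind_outside] simp del: upt_Suc)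

lemma eigenvalue_kneser_mat:
  fixes a :: "'a::idom"
  assumes "eigenvalue (kneser_mat p k) a"
  shows "\<exists>j\<le>k. a = kneser_eig p k j"
proof -
  let ?N = "length (kneser_list p k)" and ?cs = "map (kneser_eig p k) [0..<Suc k]"
  obtain v where v: "v \<in> carrier_vec ?N" "v \<noteq> 0\<^sub>v ?N" "kneser_mat p k *\<^sub>v v = a \<cdot>\<^sub>v v"
    using assms kneser_mat_carrier[of p k] unfolding eigenvalue_def eigenvector_def by auto
  have "\<exists>i<?N. v $ i \<noteq> 0"
  proof (rule ccontr)
    assume "\<not> (\<exists>i<?N. v $ i \<noteq> 0)"
    then have "v = 0\<^sub>v ?N" using v(1) by (intro eq_vecI) auto
    with v(2) show False ..
  qed
  then obtain i where i: "i < ?N" "v $ i \<noteq> 0" by blast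
  have "(\<Prod>c\<leftarrow>?cs. a - c) \<cdot>\<^sub>v v = shifted_prod_mat (kneser_mat p k) ?cs *\<^sub>v v"
    by (rule shifted_prod_mat_mult_eigenvector[OF kneser_mat_carrier v(1,3), symmetric])
  also have "\<dots> = 0\<^sub>v ?N"
    unfolding shifted_prod_kneser_mat_all_eigs_eq_zero using v(1) by (intro eq_vecI) auto
  finally have "((\<Prod>c\<leftarrow>?cs. a - c) \<cdot>\<^sub>v v) $ i = 0\<^sub>v ?N $ i" by simp
  then have "(\<Prod>c\<leftarrow>?cs. a - c) * v $ i = 0"
    using i v(1) by simp
  then have "(\<Prod>c\<leftarrow>?cs. a - c) = 0" using i(2) by simp
  then obtain j where "j \<in> set [0..<Suc k]" "a = kneser_eig p k j"
    by (auto simp: prod_list_zero_iff simp del: upt_Suc)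
  then show ?thesis by (intro exI[of _ j]) auto
qed

lemma kneser_eig_of_real: "kneser_eig p k j = of_real (kneser_eig p k j)"
  by (simp add: kneser_eig_def)

lemma char_poly_kneser_adj:
  "\<exists>rs. char_poly (kneser_adj p k) = (\<Prod>r\<leftarrow>rs. [:- r, 1:]) \<and> set rs \<subseteq> kneser_eig p k ` {0..k}"
  unfolding kneser_adj_eq_kneser_mat
proof (rule char_poly_real_factorization[OF kneser_mat_carrier])
  fix a :: complex
  assume "eigenvalue (map_mat complex_of_real (kneser_mat p k)) a"
  then obtain j where "j \<le> k" "a = kneser_eig p k j"
    unfolding map_mat_of_real_kneser_mat by (blast dest: eigenvalue_kneser_mat)
  then show "a \<in> complex_of_real ` kneser_eig p k ` {0..k}"
    by (auto simp: kneser_eig_of_real[where 'a = complex])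
qed

lemma abs_kneser_eig: "\<bar>kneser_eig p k j :: real\<bar> = real ((p - k - j) choose (k - j))"
  by (simp add: kneser_eig_def abs_mult)

lemma kneser_eig_0: "kneser_eig p k 0 = of_nat ((p - k) choose k)"
  by (simp add: kneser_eig_def)

lemma kneser_eig_le_degree:
  assumes "k \<le> p - k"
  shows "kneser_eig p k j \<le> real ((p - k) choose k)"
proof -
  have "(p - k - j) choose (k - j) \<le> (p - k - 0) choose (k - 0)"
    using assms by (intro choose_diff_mono) auto
  then have "\<bar>kneser_eig p k j\<bar> \<le> real ((p - k) choose k)" by (simp add: abs_kneser_eig)
  then show ?thesis by simp
qed

lemma kneser_eig_neq_degree:
  assumes "2 * k < p" "1 \<le> k" "1 \<le> j"
  shows "kneser_eig p k j \<noteq> real ((p - k) choose k)"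
proof -
  have "(p - k - j) choose (k - j) \<le> (p - k - 1) choose (k - 1)"
    using assms by (intro choose_diff_mono) auto
  also have "\<dots> < (p - k) choose k"
    using assms by (intro choose_pred_less) auto
  finally have "\<bar>kneser_eig p k j\<bar> < real ((p - k) choose k)"
    by (simp add: abs_kneser_eig)
  then show ?thesis by auto
qed

lemma kneser_eig_pos_le:
  assumes "2 \<le> k" "k \<le> p - k" "1 \<le> j" "0 < (kneser_eig p k j :: real)"
  shows "kneser_eig p k j \<le> real ((p - k - 2) choose (k - 2))"
proof -
  have "even j"
  proof (rule ccontr)
    assume "odd j"
    then show False using assms(4) by (simp add: kneser_eig_def)
  qed
  then have "2 \<le> j" using assms(3) by presburger
  then have "(p - k - j) choose (k - j) \<le> (p - k - 2) choose (k - 2)"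
    using assms by (intro choose_diff_mono) auto
  then have "\<bar>kneser_eig p k j\<bar> \<le> real ((p - k - 2) choose (k - 2))" by (simp add: abs_kneser_eig)
  then show ?thesis by simp
qed

lemma kneser_mat_mult_ones:
  "kneser_mat p k *\<^sub>v vec (length (kneser_list p k)) (\<lambda>_. 1) =
   of_nat ((p - k) choose k) \<cdot>\<^sub>v vec (length (kneser_list p k)) (\<lambda>_. 1)"
proof -
  have ones: "vec (length (kneser_list p k)) (\<lambda>_. 1) = kneser_vec p k (\<lambda>_. 1)"
    by (simp add: kneser_vec_def)
  have "kneser_op p k (\<lambda>_. 1::'a) B = of_nat ((p - k) choose k)" if "B \<in> kneser_verts p k" for B
    using that kneser_degree[OF that] by (simp add: kneser_op_def sum.If_cases Int_def)
  then show ?thesis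
    unfolding ones kneser_mat_mult_kneser_vec by (intro eq_vecI) (simp_all add: nth_kneser_list_mem)
qed

text \<open>The columns of \<open>\<Prod>\<^sub>1\<^sub>\<le>\<^sub>j\<^sub>\<le>\<^sub>k (A - \<theta>\<^sub>j)\<close> lie in \<open>V\<^sub>1\<close>, so all its rows coincide and its trace is
  the eigenvalue of the all-ones vector.\<close>
lemma mat_trace_shifted_prod_kneser_mat:
  assumes "k \<le> p"
  shows "mat_trace (shifted_prod_mat (kneser_mat p k) (map (kneser_eig p k) [1..<Suc k])) =
    (\<Prod>c\<leftarrow>map (kneser_eig p k) [1..<Suc k]. of_nat ((p - k) choose k) - c)"
proof -
  let ?N = "length (kneser_list p k)" and ?cs = "map (kneser_eig p k) [1..<Suc k] :: 'a list"
  let ?M = "shifted_prod_mat (kneser_mat p k) ?cs"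
  have M: "?M \<in> carrier_mat ?N ?N" by (rule shifted_prod_mat_carrier[OF kneser_mat_carrier])
  have N: "0 < ?N" using assms by (simp add: length_kneser_list)
  have "?M $$ (i, j) = ?M $$ (0, j)" if "i < ?N" "j < ?N" for i j
  proof -
    obtain c where c: "\<forall>B\<in>kneser_verts p k. kneser_prod_op p k ?cs (superset_ind p k (kneser_list p k ! j)) B = c"
      using kneser_prod_op_nonzero_eigs_const[of p k "superset_ind p k (kneser_list p k ! j)"]
      by (auto simp: superset_ind_outside)
    have "?M $$ (i', j) = c" if "i' < ?N" for i'
      unfolding shifted_prod_kneser_mat_index[OF that \<open>j < ?N\<close>]
      using c nth_kneser_list_mem[OF that] by blast
    then show ?thesis using that(1) N by metis
  qed
  then have "mat_trace ?M = (?M *\<^sub>v vec ?N (\<lambda>_. 1)) $ 0"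
    by (rule mat_trace_equal_rows[OF M N])
  also have "\<dots> = (\<Prod>c\<leftarrow>?cs. of_nat ((p - k) choose k) - c)"
    using N by (simp add: shifted_prod_mat_mult_eigenvector[OF kneser_mat_carrier _ kneser_mat_mult_ones])
  finally show ?thesis .
qed

text \<open>Schur triangularisation evaluates the same trace as \<open>\<Sum>\<^sub>\<mu> \<Prod>\<^sub>j\<^sub>\<ge>\<^sub>1 (\<mu> - \<theta>\<^sub>j)\<close>, in which only the
  copies of \<open>\<theta>\<^sub>0\<close> contribute.\<close>
lemma count_list_kneser_degree:
  assumes "2 * k < p" "1 \<le> k"
    and cp: "char_poly (kneser_mat p k) = (\<Prod>e\<leftarrow>mu. [:- e, 1:])"
    and mu: "set mu \<subseteq> kneser_eig p k ` {0..k}"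
  shows "count_list mu (real ((p - k) choose k)) = 1"
proof -
  let ?d = "real ((p - k) choose k)" and ?cs = "map (kneser_eig p k) [1..<Suc k]"
  let ?g = "\<lambda>e. \<Prod>c\<leftarrow>?cs. e - c"
  have "?g e = (if e = ?d then ?g ?d else 0)" if e: "e \<in> set mu" for e
  proof -
    obtain j where j: "j \<le> k" "e = kneser_eig p k j" using mu e by auto
    show ?thesis
    proof (cases "j = 0")
      case False
      then have "e \<in> set ?cs" using j by (auto simp del: upt_Suc)
      then show ?thesis using j False kneser_eig_neq_degree[OF assms(1,2)]
        by (auto simp: prod_list_zero_iff simp del: upt_Suc)
    qed (use j in \<open>simp add: kneser_eig_0\<close>)
  qed
  then have "(\<Sum>e\<leftarrow>mu. ?g e) = (\<Sum>e\<leftarrow>mu. if e = ?d then ?g ?d else 0)"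
    by (intro arg_cong[where f = sum_list] map_cong) simp_all
  also have "\<dots> = real (count_list mu ?d) * ?g ?d"
    by (induction mu) (auto simp: algebra_simps)
  finally have "mat_trace (shifted_prod_mat (kneser_mat p k) ?cs) = real (count_list mu ?d) * ?g ?d"
    by (simp add: mat_trace_shifted_prod_mat[OF kneser_mat_carrier cp])
  moreover have "mat_trace (shifted_prod_mat (kneser_mat p k) ?cs) = ?g ?d"
    using assms(1) mat_trace_shifted_prod_kneser_mat[of k p] by (simp del: upt_Suc)
  moreover have "?g ?d \<noteq> 0"
  proof -
    have "0 \<notin> set (map (\<lambda>c. ?d - c) ?cs)"
    proof
      assume "0 \<in> set (map (\<lambda>c. ?d - c) ?cs)"
      then obtain j where "1 \<le> j" "?d = kneser_eig p k j" by (auto simp del: upt_Suc)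
      then show False using kneser_eig_neq_degree[OF assms(1,2), of j] by metis
    qed
    then show ?thesis by (simp add: prod_list_zero_iff del: upt_Suc)
  qed
  ultimately show ?thesis by simp
qed

lemma kneser_eigenvalues_desc:
  fixes p k :: nat
  defines "mu \<equiv> eigenvalues_desc (kneser_adj p k)"
  shows "sorted_wrt (\<ge>) mu" and "set mu \<subseteq> kneser_eig p k ` {0..k}"
    and "char_poly (kneser_mat p k) = (\<Prod>e\<leftarrow>mu. [:- e, 1:])"
proof -
  obtain rs where rs: "char_poly (kneser_adj p k) = (\<Prod>r\<leftarrow>rs. [:- r, 1:])"
    "set rs \<subseteq> kneser_eig p k ` {0..k}"
    using char_poly_kneser_adj by blast
  have mu_rs: "mu = rev (sort rs)" unfolding mu_def by (rule eigenvalues_desc_eq[OF rs(1)])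
  show "sorted_wrt (\<ge>) mu" unfolding mu_rs by (simp add: sorted_wrt_rev)
  show "set mu \<subseteq> kneser_eig p k ` {0..k}" using rs(2) by (simp add: mu_rs)
  show "char_poly (kneser_mat p k) = (\<Prod>e\<leftarrow>mu. [:- e, 1:])"
    using rs(1) by (simp add: mu_rs kneser_adj_eq_kneser_mat flip: prod_mset_prod_list)
qed

lemma kneser_eigenvalues_desc_simple_head:
  assumes "2 * k < p" "1 \<le> k"
  obtains rest where "eigenvalues_desc (kneser_adj p k) = real ((p - k) choose k) # rest"
    and "real ((p - k) choose k) \<notin> set rest"
proof -
  let ?mu = "eigenvalues_desc (kneser_adj p k)" and ?d = "real ((p - k) choose k)"
  note mu = kneser_eigenvalues_desc[of p k]
  have count: "count_list ?mu ?d = 1" by (rule count_list_kneser_degree[OF assms mu(3,2)])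
  then have "?d \<in> set ?mu" by (metis count_list_0_iff zero_neq_one)
  then obtain e rest where e: "?mu = e # rest" by (cases ?mu) auto
  have "e \<le> ?d" using mu(2) e kneser_eig_le_degree[of k p] assms(1) by force
  moreover have "?d \<le> e" using mu(1) e \<open>?d \<in> set ?mu\<close> by auto
  ultimately have "?mu = ?d # rest" using e by simp
  moreover have "?d \<notin> set rest" using count calculation by (simp add: count_list_0_iff)
  ultimately show ?thesis using that by blast
qed

section \<open>Clique number, edges and the bound\<close>

lemma kneser_clique_card_le:
  assumes "kneser_clique p k C"
  shows "card C * k \<le> p"
proof -
  have C: "C \<subseteq> kneser_verts p k" and disj: "pairwise disjnt C"
    using assms unfolding kneser_clique_def pairwise_def disjnt_def by blast+
  have "card C * k = sum card C"
    using C by (simp add: kneser_verts_iff subset_iff)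
  also have "\<dots> = card (\<Union>C)"
    using C disj finite_kneser_vert by (intro card_Union_disjoint[symmetric]) auto
  also have "\<dots> \<le> card {0..<p}"
    using C unfolding kneser_verts_def by (intro card_mono) blast+
  finally show ?thesis by simp
qed

lemma kneser_clique_blocks:
  assumes "1 \<le> k"
  shows "kneser_clique p k ((\<lambda>i. {i * k..<i * k + k}) ` {..<p div k})"
    and "card ((\<lambda>i. {i * k..<i * k + k}) ` {..<p div k}) = p div k"
proof -
  let ?blk = "\<lambda>i. {i * k..<i * k + k}"
  have disj: "?blk i \<inter> ?blk j = {}" if "i \<noteq> j" for i j
  proof -
    have "i * k + k \<le> j * k \<or> j * k + k \<le> i * k"
      using that mult_le_mono1[of "Suc i" j k] mult_le_mono1[of "Suc j" i k] by (cases "i < j") auto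
    then show ?thesis by auto
  qed
  have vert: "?blk i \<in> kneser_verts p k" if "i < p div k" for i
  proof -
    have "i * k + k \<le> p div k * k" using mult_le_mono1[of "Suc i" "p div k" k] that by simp
    also have "\<dots> \<le> p" by (rule div_times_less_eq_dividend)
    finally show ?thesis by (auto simp: kneser_verts_iff)
  qed
  show "kneser_clique p k (?blk ` {..<p div k})"
    unfolding kneser_clique_def
  proof (intro conjI ballI impI subsetI)
    fix B assume "B \<in> ?blk ` {..<p div k}"
    then show "B \<in> kneser_verts p k" using vert by blast
  next
    fix A B assume "A \<in> ?blk ` {..<p div k}" "B \<in> ?blk ` {..<p div k}" "A \<noteq> B"
    then obtain i j where "A = ?blk i" "B = ?blk j" "i \<noteq> j" by blast
    then show "A \<inter> B = {}" using disj by simp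
  qed
  have "inj_on ?blk {..<p div k}"
  proof (rule inj_onI)
    fix i j assume "?blk i = ?blk j"
    moreover have "?blk i \<noteq> {}" using assms by simp
    ultimately show "i = j" using disj[of i j] by auto
  qed
  then show "card (?blk ` {..<p div k}) = p div k" by (simp add: card_image)
qed

lemma kneser_clique_number_eq:
  assumes "1 \<le> k"
  shows "kneser_clique_number p k = p div k"
  unfolding kneser_clique_number_def
proof (rule Max_eqI)
  have "{card C | C. kneser_clique p k C} \<subseteq> {..p div k}"
    using kneser_clique_card_le assms by (auto simp: less_eq_div_iff_mult_less_eq)
  then show "finite {card C | C. kneser_clique p k C}" by (rule finite_subset) simp
  show "c \<le> p div k" if "c \<in> {card C | C. kneser_clique p k C}" for c
    using that kneser_clique_card_le assms by (auto simp: less_eq_div_iff_mult_less_eq)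
  show "p div k \<in> {card C | C. kneser_clique p k C}"
    using kneser_clique_blocks[OF assms, where p = p] by (metis (mono_tags, lifting) mem_Collect_eq)
qed

lemma kneser_edges_ge:
  assumes "1 \<le> k"
  shows "(p choose k) * ((p - k) choose k) \<le> 2 * kneser_edges p k"
proof -
  let ?V = "kneser_verts p k"
  let ?P = "Sigma ?V (\<lambda>A. {B \<in> ?V. A \<inter> B = {}})"
  let ?E = "{{A, B} | A B. A \<in> ?V \<and> B \<in> ?V \<and> A \<noteq> B \<and> A \<inter> B = {}}"
  let ?fibre = "\<lambda>e. {x \<in> ?P. {fst x, snd x} = e}"
  have finP: "finite ?P" by (intro finite_SigmaI) auto
  have "?E \<subseteq> Pow ?V"
  proof
    fix e assume "e \<in> ?E"
    then obtain A B where "e = {A, B}" "A \<in> ?V" "B \<in> ?V" by blast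
    then show "e \<in> Pow ?V" by simp
  qed
  then have finE: "finite ?E" by (rule finite_subset) simp
  have cover: "?P \<subseteq> (\<Union>e\<in>?E. ?fibre e)"
  proof
    fix x assume x: "x \<in> ?P"
    then obtain A B where AB: "x = (A, B)" "A \<in> ?V" "B \<in> ?V" "A \<inter> B = {}" by auto
    then have "A \<noteq> B" using assms by (auto simp: kneser_verts_iff)
    then have "{A, B} \<in> ?E" using AB by blast
    moreover have "x \<in> ?fibre {A, B}" using x AB by simp
    ultimately show "x \<in> (\<Union>e\<in>?E. ?fibre e)" by (rule UN_I)
  qed
  have fibre: "card (?fibre e) \<le> 2" if e: "e \<in> ?E" for e
  proof -
    from e obtain X Y where e: "e = {X, Y}" by auto
    have sub: "?fibre e \<subseteq> {(X, Y), (Y, X)}" by (auto simp: e doubleton_eq_iff)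
    have "card (?fibre e) \<le> card {(X, Y), (Y, X)}" by (rule card_mono[OF _ sub]) simp
    also have "\<dots> \<le> 2" by (cases "X = Y") simp_all
    finally show ?thesis .
  qed
  have "(p choose k) * ((p - k) choose k) = card ?P"
    by (simp add: card_SigmaI kneser_degree card_kneser_verts)
  also have "\<dots> \<le> card (\<Union>e\<in>?E. ?fibre e)"
    using cover by (rule card_mono[OF finite_subset[OF _ finP], rotated]) auto
  also have "\<dots> \<le> (\<Sum>e\<in>?E. card (?fibre e))" by (rule card_UN_le[OF finE])
  also have "\<dots> \<le> (\<Sum>e\<in>?E. 2)" using fibre by (rule sum_mono)
  also have "\<dots> = 2 * card ?E" by simp
  finally show ?thesis unfolding kneser_edges_def .
qed

lemma kneser_degree_gap:
  assumes "1 \<le> k" "2 * k < p"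
  shows "k * ((p - k) choose k) \<le> ((p choose k) - ((p - k) choose k)) * (p div k - 1)"
proof -
  let ?a = "p - k"
  have "p = k * (p div k) + p mod k" by simp
  moreover have "p mod k < k" using assms(1) by simp
  ultimately have "p < k * (p div k) + k" by linarith
  then have width: "?a - (k - 1) \<le> k * (p div k - 1)"
    using assms by (simp add: diff_mult_distrib2)
  have "k * (?a choose k) = ?a * ((?a - 1) choose (k - 1))"
    using assms(1) by (simp add: times_binomial_minus1_eq)
  also have "\<dots> = (?a - (k - 1)) * (?a choose (k - 1))"
    by (rule binomial_absorb_comp[symmetric])
  also have "\<dots> \<le> k * (p div k - 1) * (?a choose (k - 1))"
    using width by (rule mult_right_mono) simp
  also have "\<dots> = (p div k - 1) * (k * (?a choose (k - 1)))" by simp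
  also have "\<dots> \<le> (p div k - 1) * ((p choose k) - (?a choose k))"
    using choose_add_choose_pred_le[of k p] assms by (intro mult_left_mono) auto
  finally show ?thesis by (simp add: mult.commute)
qed

lemma kneser_second_eig_sq_le:
  assumes "2 \<le> k" "2 * k < p"
  shows "real (p div k) * (real (p div k) - 1) * real ((p - k - 2) choose (k - 2))^2
    \<le> (real k - 1) * real ((p - k) choose k)^2"
proof -
  define a where "a = real (p - k)"
  define W where "W = real (p div k)"
  define t where "t = real ((p - k - 2) choose (k - 2))"
  define d where "d = real ((p - k) choose k)"
  have ak: "real k + 1 \<le> a" using assms by (simp add: a_def)
  have "real (k * (k - 1) * ((p - k) choose k)) = real ((p - k) * (p - k - 1) * ((p - k - 2) choose (k - 2)))"
    using times_binomial_minus2_eq[OF assms(1)] by (rule arg_cong)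
  then have "real k * real (k - 1) * d = a * real (p - k - 1) * t"
    unfolding of_nat_mult a_def t_def d_def .
  moreover have "real (k - 1) = real k - 1" "real (p - k - 1) = a - 1"
    using assms by (simp_all add: a_def of_nat_diff)
  ultimately have td: "a * (a - 1) * t = real k * (real k - 1) * d" by simp
  have "real (k * (p div k)) \<le> real p"
    using div_times_less_eq_dividend[of p k] by (simp only: of_nat_le_iff mult.commute)
  then have kW: "real k * W \<le> a + real k"
    using assms by (simp add: W_def a_def of_nat_diff)
  have "(W * t)^2 * (a * (a - 1))^2 = (W * (a * (a - 1) * t))^2"
    by (simp add: power2_eq_square ac_simps)
  also have "\<dots> = (real k * W)^2 * (real k - 1) * ((real k - 1) * d^2)"
    unfolding td by (simp add: power2_eq_square ac_simps)
  also have "\<dots> \<le> (a + real k)^2 * (real k - 1) * ((real k - 1) * d^2)"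
    using kW assms(1) by (intro mult_right_mono power_mono) (auto simp: W_def)
  also have "\<dots> \<le> (a * (a - 1))^2 * ((real k - 1) * d^2)"
    using add_sq_mult_pred_le[OF _ ak] assms(1) by (intro mult_right_mono) (auto simp: power_mult_distrib)
  finally have "(W * t)^2 \<le> (real k - 1) * d^2"
    using ak assms(1) by (simp add: mult.commute[of _ "(a * (a - 1))^2"])
  moreover have "W * (W - 1) * t^2 \<le> (W * t)^2"
  proof -
    have "W * (W - 1) * t^2 = (W * t)^2 - W * t^2" by (simp add: power2_eq_square algebra_simps)
    moreover have "0 \<le> W * t^2" by (simp add: W_def)
    ultimately show ?thesis by linarith
  qed
  ultimately show ?thesis unfolding W_def t_def d_def by linarith
qed

lemma kneser_eig_sum_sq_le:
  assumes "2 \<le> k" "2 * k < p"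
  shows "real ((p - k) choose k)^2 + (real (p div k) - 1) * real ((p - k - 2) choose (k - 2))^2
    \<le> real (p choose k) * real ((p - k) choose k) * (real (p div k) - 1) / real (p div k)"
proof -
  define n where "n = real (p choose k)"
  define d where "d = real ((p - k) choose k)"
  define t where "t = real ((p - k - 2) choose (k - 2))"
  define W where "W = real (p div k)"
  have W2: "2 \<le> p div k" using assms by (simp add: less_eq_div_iff_mult_less_eq)
  have "(p - k) choose k \<le> p choose k"
    using choose_add_choose_pred_le[of k p] assms by simp
  moreover have "k * ((p - k) choose k) \<le> ((p choose k) - ((p - k) choose k)) * (p div k - 1)"
    by (rule kneser_degree_gap) (use assms in auto)
  then have "real (k * ((p - k) choose k)) \<le> real (((p choose k) - ((p - k) choose k)) * (p div k - 1))"
    by (simp only: of_nat_le_iff)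
  ultimately have gap: "real k * d \<le> (n - d) * (W - 1)"
    using W2 by (simp add: n_def d_def W_def of_nat_diff)
  have sq: "W * (W - 1) * t^2 \<le> (real k - 1) * d^2"
    using kneser_second_eig_sq_le[OF assms] by (simp add: W_def t_def d_def)
  have "W * (d^2 + (W - 1) * t^2) = (W - 1) * d^2 + d * d + W * (W - 1) * t^2"
    by (simp add: algebra_simps power2_eq_square)
  also have "\<dots> \<le> (W - 1) * d^2 + d * (real k * d)"
    using sq by (simp add: algebra_simps power2_eq_square)
  also have "\<dots> \<le> (W - 1) * d^2 + d * ((n - d) * (W - 1))"
    using gap by (intro add_left_mono mult_left_mono) (simp_all add: d_def)
  also have "\<dots> = n * d * (W - 1)"
    by (simp add: algebra_simps power2_eq_square)
  finally have "W * (d^2 + (W - 1) * t^2) \<le> n * d * (W - 1)" .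
  then show ?thesis
    using W2 unfolding n_def d_def t_def W_def by (simp add: pos_le_divide_eq mult.commute)
qed

lemma sum_sq_kneser_eigenvalues_le:
  assumes "2 \<le> k" "2 * k < p"
    and l: "l \<le> length (filter (\<lambda>x. 0 < x) (eigenvalues_desc (kneser_adj p k)))" "l \<le> Suc w"
  shows "(\<Sum>i<l. (eigenvalues_desc (kneser_adj p k) ! i)^2)
    \<le> real ((p - k) choose k)^2 + real w * real ((p - k - 2) choose (k - 2))^2"
proof -
  obtain rest where mu: "eigenvalues_desc (kneser_adj p k) = real ((p - k) choose k) # rest"
    and d: "real ((p - k) choose k) \<notin> set rest"
    using kneser_eigenvalues_desc_simple_head assms by (metis one_le_numeral order_trans)
  have "x \<le> real ((p - k - 2) choose (k - 2))" if x: "x \<in> set rest" "0 < x" for x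
  proof -
    obtain j where j: "j \<le> k" "x = kneser_eig p k j"
      using kneser_eigenvalues_desc(2)[of p k] mu x(1) by auto
    then have "j \<noteq> 0" using d x(1) by (cases "j = 0") (auto simp: kneser_eig_0)
    then show ?thesis using kneser_eig_pos_le[of k p j] assms j x(2) by simp
  qed
  then show ?thesis
    using sum_sq_sorted_prefix_le[OF _ _ l[unfolded mu]] kneser_eigenvalues_desc(1)[of p k]
    unfolding mu by blast
qed

text \<open>\<open>KG(2k,k)\<close> is a perfect matching: all its eigenvalues are \<open>\<plusminus>1\<close>.\<close>
lemma sum_sq_kneser_eigenvalues_2k_le:
  assumes "2 \<le> k" "l \<le> 2" "l \<le> length (eigenvalues_desc (kneser_adj (2 * k) k))"
  shows "(\<Sum>i<l. (eigenvalues_desc (kneser_adj (2 * k) k) ! i)^2) \<le> real (kneser_edges (2 * k) k)"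
proof -
  let ?mu = "eigenvalues_desc (kneser_adj (2 * k) k)"
  have "(?mu ! i)^2 = 1" if "i < l" for i
  proof -
    have "?mu ! i \<in> set ?mu" using that assms(3) by simp
    then obtain j where "?mu ! i = (-1) ^ j"
      using kneser_eigenvalues_desc(2)[of "2 * k" k] by (auto simp: kneser_eig_def)
    then show ?thesis by (simp add: mult.commute flip: power_mult)
  qed
  then have "(\<Sum>i<l. (?mu ! i)^2) \<le> 2" using assms(2) by simp
  also have "\<dots> \<le> real (kneser_edges (2 * k) k)"
    using kneser_edges_ge[of k "2 * k"] central_binomial_ge_4[OF assms(1)] assms(1) by simp
  finally show ?thesis .
qed

theorem mainTheorem2:
  fixes p k :: nat
  assumes "k \<ge> 2" and "p \<ge> 2 * k"
  shows "let mu = eigenvalues_desc (kneser_adj p k);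
             m = kneser_edges p k;
             \<omega> = kneser_clique_number p k;
             npos = length (filter (\<lambda>x. x > 0) mu);
             l = min npos \<omega>
         in (\<Sum>i<l. (mu ! i)^2) \<le> 2 * real m * (real \<omega> - 1) / real \<omega>"
proof -
  define mu where "mu = eigenvalues_desc (kneser_adj p k)"
  define \<omega> where "\<omega> = kneser_clique_number p k"
  define l where "l = min (length (filter (\<lambda>x. x > 0) mu)) \<omega>"
  have \<omega>: "\<omega> = p div k" "2 \<le> \<omega>"
    using assms by (simp_all add: \<omega>_def kneser_clique_number_eq less_eq_div_iff_mult_less_eq)
  have l: "l \<le> length (filter (\<lambda>x. 0 < x) mu)" "l \<le> \<omega>" "l \<le> length mu"
    using length_filter_le[of "\<lambda>x. 0 < x" mu] by (auto simp: l_def min_le_iff_disj)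
  have "(\<Sum>i<l. (mu ! i)^2) \<le> 2 * real (kneser_edges p k) * (real \<omega> - 1) / real \<omega>"
  proof (cases "p = 2 * k")
    case True
    then show ?thesis
      using sum_sq_kneser_eigenvalues_2k_le[of k l] assms l \<omega> by (simp add: mu_def)
  next
    case False
    have "(\<Sum>i<l. (mu ! i)^2) \<le> real ((p - k) choose k)^2 + real (\<omega> - 1) * real ((p - k - 2) choose (k - 2))^2"
      using sum_sq_kneser_eigenvalues_le[of k p l "\<omega> - 1"] False assms l \<omega> by (simp add: mu_def)
    also have "\<dots> \<le> real (p choose k) * real ((p - k) choose k) * (real \<omega> - 1) / real \<omega>"
      using kneser_eig_sum_sq_le[of k p] False assms \<omega> by (simp add: of_nat_diff)
    also have "\<dots> \<le> 2 * real (kneser_edges p k) * (real \<omega> - 1) / real \<omega>"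
      using kneser_edges_ge[of k p] assms \<omega>(2)
      by (intro divide_right_mono mult_right_mono) (simp_all flip: of_nat_mult of_nat_le_iff)
    finally show ?thesis .
  qed
  then show ?thesis unfolding Let_def mu_def \<omega>_def l_def .
qed

end
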